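(* Let $n\geq 2$ and let $(A,\cdot,[\cdot,\ldots,\cdot])$ be a simple transposed Poisson $n$-Lie algebra. Then there is no nonzero proper subspace $I\subsetneq A$ such that $[I,A,\ldots,A]\subseteq I$ and $[A\cdot I,A,\ldots,A]\subseteq I$ (i.e. $A$ contains no nonzero quasi-ideals).
   Context: An $n$-Lie algebra is a vector space $L$ with an $n$-linear skew-symmetric bracket satisfying $[[x_1,\ldots,x_n],y_2,\ldots,y_n]=\sum_{i=1}^n[x_1,\ldots,x_{i-1},[x_i,y_2,\ldots,y_n],x_{i+1},\ldots,x_n]$. A transposed Poisson $n$-Lie algebra (over $\mathbb{C}$) is a triple $(A,\cdot,[\cdot,\ldots,\cdot])$ where $(A,\cdot)$ is commutative associative, $(A,[\cdot,\ldots,\cdot])$ is an $n$-Lie algebra, and $n\,h\,[a_1,\ldots,a_n]=\sum_{i=1}^n[a_1,\ldots,h a_i,\ldots,a_n]$ for all $h,a_i\in A$. An ideal of $(A,\cdot,[\cdot,\ldots,\cdot])$ is a subspace $J$ with $A\cdot J\subseteq J$ and $[J,A,\ldots,A]\subseteq J$; the algebra is simple if $[A,\ldots,A]\neq 0$ and its only ideals are $0$ and $A$. Here $[I,A,\ldots,A]$ denotes the span of all $[u,a_2,\ldots,a_n]$ with $u\in I$, $a_k\in A$, and $A\cdot I$ the span of all products $au$ with $a\in A,u\in I$. *)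

theory Defs
  imports Complex_Main
begin

text \<open>An n-ary bracket is a function br on lists; only lists of length n matter.\<close>

definition multilinear_br :: "nat \<Rightarrow> (complex \<Rightarrow> 'a::ab_group_add \<Rightarrow> 'a) \<Rightarrow> ('a list \<Rightarrow> 'a) \<Rightarrow> bool" where
  "multilinear_br n smul br \<longleftrightarrow>
     (\<forall>xs i x y c. length xs = n \<and> i < n \<longrightarrow>
        br (xs[i := x + y]) = br (xs[i := x]) + br (xs[i := y]) \<and>
        br (xs[i := smul c x]) = smul c (br (xs[i := x])))"

definition skew_br :: "nat \<Rightarrow> ('a::ab_group_add list \<Rightarrow> 'a) \<Rightarrow> bool" where
  "skew_br n br \<longleftrightarrow>
     (\<forall>xs i j. length xs = n \<and> i < j \<and> j < n \<longrightarrow>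
        br (xs[i := xs ! j, j := xs ! i]) = - br xs)"

definition filippov :: "nat \<Rightarrow> ('a::ab_group_add list \<Rightarrow> 'a) \<Rightarrow> bool" where
  "filippov n br \<longleftrightarrow>
     (\<forall>xs ys. length xs = n \<and> length ys = n - 1 \<longrightarrow>
        br (br xs # ys) = (\<Sum>i<n. br (xs[i := br (xs ! i # ys)])))"

definition n_Lie :: "nat \<Rightarrow> (complex \<Rightarrow> 'a::ab_group_add \<Rightarrow> 'a) \<Rightarrow> ('a list \<Rightarrow> 'a) \<Rightarrow> bool" where
  "n_Lie n smul br \<longleftrightarrow> multilinear_br n smul br \<and> skew_br n br \<and> filippov n br"

definition comm_assoc_alg :: "(complex \<Rightarrow> 'a::ab_group_add \<Rightarrow> 'a) \<Rightarrow> ('a \<Rightarrow> 'a \<Rightarrow> 'a) \<Rightarrow> bool" where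
  "comm_assoc_alg smul mult \<longleftrightarrow>
     (\<forall>x y z. mult (x + y) z = mult x z + mult y z) \<and>
     (\<forall>c x y. mult (smul c x) y = smul c (mult x y)) \<and>
     (\<forall>x y. mult x y = mult y x) \<and>
     (\<forall>x y z. mult (mult x y) z = mult x (mult y z))"

definition transposed_Poisson_nLie ::
  "nat \<Rightarrow> (complex \<Rightarrow> 'a::ab_group_add \<Rightarrow> 'a) \<Rightarrow> ('a \<Rightarrow> 'a \<Rightarrow> 'a) \<Rightarrow> ('a list \<Rightarrow> 'a) \<Rightarrow> bool" where
  "transposed_Poisson_nLie n smul mult br \<longleftrightarrow>
     module smul \<and> comm_assoc_alg smul mult \<and> n_Lie n smul br \<and>
     (\<forall>h xs. length xs = n \<longrightarrow>
        smul (of_nat n) (mult h (br xs)) = (\<Sum>i<n. br (xs[i := mult h (xs ! i)])))"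

definition tp_ideal ::
  "nat \<Rightarrow> (complex \<Rightarrow> 'a::ab_group_add \<Rightarrow> 'a) \<Rightarrow> ('a \<Rightarrow> 'a \<Rightarrow> 'a) \<Rightarrow> ('a list \<Rightarrow> 'a) \<Rightarrow> 'a set \<Rightarrow> bool" where
  "tp_ideal n smul mult br J \<longleftrightarrow>
     module.subspace smul J \<and>
     (\<forall>a u. u \<in> J \<longrightarrow> mult a u \<in> J) \<and>
     (\<forall>u as. u \<in> J \<and> length as = n - 1 \<longrightarrow> br (u # as) \<in> J)"

definition simple_tp ::
  "nat \<Rightarrow> (complex \<Rightarrow> 'a::ab_group_add \<Rightarrow> 'a) \<Rightarrow> ('a \<Rightarrow> 'a \<Rightarrow> 'a) \<Rightarrow> ('a list \<Rightarrow> 'a) \<Rightarrow> bool" where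
  "simple_tp n smul mult br \<longleftrightarrow>
     (\<exists>xs. length xs = n \<and> br xs \<noteq> 0) \<and>
     (\<forall>J. tp_ideal n smul mult br J \<longrightarrow> J = {0} \<or> J = UNIV)"

end

theory Submission
  imports Defs
begin

text \<open>Let \<open>I\<close> be a quasi-ideal. By the transposed Poisson identity, \<open>n h [u, a\<^sub>2, \<dots>, a\<^sub>n]\<close> equals
  \<open>[h u, a\<^sub>2, \<dots>, a\<^sub>n]\<close> plus brackets with first entry \<open>u\<close>. Hence the largest \<open>A\<close>-submodule
  \<open>{x \<in> I. A x \<subseteq> I}\<close> of \<open>I\<close> is an ideal, so it is \<open>0\<close> by simplicity; but it contains
  \<open>[I, A, \<dots>, A]\<close>, so \<open>I\<close> lies in the centre \<open>{z. [z, A, \<dots>, A] = 0}\<close>. The same identity shows that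
  the centre is an ideal, and it is not \<open>A\<close> because the bracket is nonzero, so the centre is \<open>0\<close>
  and so is \<open>I\<close>. Only multilinearity in the first entry of the bracket and \<open>n > 0\<close> are used.\<close>

lemma (in vector_space) subspace_scale_cancel:
  assumes "subspace S" "c \<noteq> 0" "scale c x \<in> S"
  shows "x \<in> S"
proof -
  have "scale (inverse c) (scale c x) \<in> S"
    using assms(1,3) by (rule subspace_scale)
  then show ?thesis
    using assms(2) by simp
qed

definition quasi_ideal ::
  "nat \<Rightarrow> (complex \<Rightarrow> 'a::ab_group_add \<Rightarrow> 'a) \<Rightarrow> ('a \<Rightarrow> 'a \<Rightarrow> 'a) \<Rightarrow> ('a list \<Rightarrow> 'a) \<Rightarrow> 'a set \<Rightarrow> bool" where
  "quasi_ideal n smul mult br I \<longleftrightarrow>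
     module.subspace smul I \<and>
     (\<forall>u as. u \<in> I \<and> length as = n - 1 \<longrightarrow> br (u # as) \<in> I) \<and>
     (\<forall>a u as. u \<in> I \<and> length as = n - 1 \<longrightarrow> br (mult a u # as) \<in> I)"

locale transposed_Poisson_nLie_algebra =
  fixes n :: nat
    and smul :: "complex \<Rightarrow> 'a::ab_group_add \<Rightarrow> 'a"
    and mult :: "'a \<Rightarrow> 'a \<Rightarrow> 'a"
    and br :: "'a list \<Rightarrow> 'a"
  assumes transposed_Poisson: "transposed_Poisson_nLie n smul mult br"
    and n_pos: "0 < n"
begin

sublocale vector_space smul
  using transposed_Poisson
  by (simp add: transposed_Poisson_nLie_def module_iff_vector_space)

lemma comm_assoc_alg: "comm_assoc_alg smul mult"
  using transposed_Poisson by (simp add: transposed_Poisson_nLie_def)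

lemma mult_add_left: "mult (x + y) z = mult x z + mult y z"
  and mult_scale_left: "mult (smul c x) y = smul c (mult x y)"
  and mult_commute: "mult x y = mult y x"
  and mult_assoc: "mult (mult x y) z = mult x (mult y z)"
  using comm_assoc_alg unfolding comm_assoc_alg_def by blast+

lemma mult_add_right: "mult h (x + y) = mult h x + mult h y"
  by (metis mult_commute mult_add_left)

lemma mult_scale_right: "mult h (smul c x) = smul c (mult h x)"
  by (metis mult_commute mult_scale_left)

lemma mult_zero_right: "mult h 0 = 0"
  using mult_add_right[of h 0 0] by simp

lemma br_update_multilinear:
  assumes "length xs = n" "i < n"
  shows "br (xs[i := x + y]) = br (xs[i := x]) + br (xs[i := y])"
    and "br (xs[i := smul c x]) = smul c (br (xs[i := x]))"
  using transposed_Poisson assms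
  by (simp_all add: transposed_Poisson_nLie_def n_Lie_def multilinear_br_def)

lemma br_Cons_add:
  assumes "length as = n - 1"
  shows "br ((x + y) # as) = br (x # as) + br (y # as)"
  using br_update_multilinear(1)[of "x # as" 0] assms n_pos by simp

lemma br_Cons_scale:
  assumes "length as = n - 1"
  shows "br (smul c x # as) = smul c (br (x # as))"
  using br_update_multilinear(2)[of "x # as" 0] assms n_pos by simp

lemma br_Cons_zero:
  assumes "length as = n - 1"
  shows "br (0 # as) = 0"
  using br_Cons_add[OF assms, of 0 0] by simp

lemma transposed_Poisson_Cons:
  assumes "length as = n - 1"
  shows "smul (of_nat n) (mult h (br (u # as))) =
     br (mult h u # as) + (\<Sum>i<n - 1. br (u # as[i := mult h (as ! i)]))"
proof -
  have "smul (of_nat n) (mult h (br (u # as))) =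
      (\<Sum>i<Suc (n - 1). br ((u # as)[i := mult h ((u # as) ! i)]))"
    using transposed_Poisson assms n_pos by (simp add: transposed_Poisson_nLie_def)
  also have "\<dots> = br (mult h u # as) + (\<Sum>i<n - 1. br (u # as[i := mult h (as ! i)]))"
    by (subst sum.lessThan_Suc_shift) simp
  finally show ?thesis .
qed

lemma mult_br_in_subspace:
  assumes "subspace S" "length as = n - 1"
    and "br (mult h u # as) \<in> S"
    and "\<And>i. i < n - 1 \<Longrightarrow> br (u # as[i := mult h (as ! i)]) \<in> S"
  shows "mult h (br (u # as)) \<in> S"
proof (rule subspace_scale_cancel[OF \<open>subspace S\<close>])
  show "of_nat n \<noteq> (0 :: complex)"
    using n_pos by simp
  show "smul (of_nat n) (mult h (br (u # as))) \<in> S"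
    unfolding transposed_Poisson_Cons[OF assms(2)]
    using assms by (intro subspace_add subspace_sum) auto
qed

definition mult_core :: "'a set \<Rightarrow> 'a set" where
  "mult_core I = {x \<in> I. \<forall>h. mult h x \<in> I}"

definition br_center :: "'a set" where
  "br_center = {z. \<forall>as. length as = n - 1 \<longrightarrow> br (z # as) = 0}"

lemma mult_core_subset: "mult_core I \<subseteq> I"
  by (auto simp: mult_core_def)

lemma tp_ideal_mult_core:
  assumes "subspace I"
    and "\<And>u as. u \<in> I \<Longrightarrow> length as = n - 1 \<Longrightarrow> br (u # as) \<in> I"
  shows "tp_ideal n smul mult br (mult_core I)"
  unfolding tp_ideal_def
proof (intro conjI allI impI)
  show "subspace (mult_core I)"
    using subspace_0[OF assms(1)] subspace_add[OF assms(1)] subspace_scale[OF assms(1)]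
    by (auto simp: subspace_def mult_core_def mult_zero_right mult_add_right mult_scale_right)
  show "mult a u \<in> mult_core I" if "u \<in> mult_core I" for a u
    using that by (auto simp: mult_core_def simp flip: mult_assoc)
  show "br (u # as) \<in> mult_core I" if "u \<in> mult_core I \<and> length as = n - 1" for u as
    using that assms by (auto simp: mult_core_def intro: mult_br_in_subspace)
qed

lemma quasi_ideal_br_in_mult_core:
  assumes "quasi_ideal n smul mult br I" "u \<in> I" "length as = n - 1"
  shows "br (u # as) \<in> mult_core I"
  using assms by (auto simp: quasi_ideal_def mult_core_def intro: mult_br_in_subspace)

lemma tp_ideal_br_center: "tp_ideal n smul mult br br_center"
  unfolding tp_ideal_def
proof (intro conjI allI impI)
  show "subspace br_center"
    by (auto simp: subspace_def br_center_def br_Cons_add br_Cons_scale br_Cons_zero)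
  show "mult a u \<in> br_center" if "u \<in> br_center" for a u
    unfolding br_center_def
  proof (intro CollectI allI impI)
    fix as :: "'a list"
    assume "length as = n - 1"
    with that show "br (mult a u # as) = 0"
      using transposed_Poisson_Cons[of as a u] by (simp add: br_center_def mult_zero_right)
  qed
  show "br (u # as) \<in> br_center" if "u \<in> br_center \<and> length as = n - 1" for u as
    using that by (simp add: br_center_def br_Cons_zero)
qed

lemma br_center_eq_0_if_simple:
  assumes "simple_tp n smul mult br"
  shows "br_center = {0}"
proof -
  obtain xs where xs: "length xs = n" "br xs \<noteq> 0"
    using assms by (auto simp: simple_tp_def)
  then obtain x as where "xs = x # as" "length as = n - 1"
    using n_pos by (cases xs) auto
  with xs have "x \<notin> br_center"
    by (auto simp: br_center_def)
  then show ?thesis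
    using assms tp_ideal_br_center by (auto simp: simple_tp_def)
qed

lemma proper_quasi_ideal_subset_br_center:
  assumes "simple_tp n smul mult br" "quasi_ideal n smul mult br I" "I \<noteq> UNIV"
  shows "I \<subseteq> br_center"
proof -
  have "tp_ideal n smul mult br (mult_core I)"
    using assms(2) by (intro tp_ideal_mult_core) (auto simp: quasi_ideal_def)
  moreover have "mult_core I \<noteq> UNIV"
    using mult_core_subset assms(3) by blast
  ultimately have "mult_core I = {0}"
    using assms(1) by (auto simp: simple_tp_def)
  then show ?thesis
    using quasi_ideal_br_in_mult_core[OF assms(2)] by (auto simp: br_center_def)
qed

end

theorem mainTheorem4:
  fixes n :: nat
    and smul :: "complex \<Rightarrow> 'a::ab_group_add \<Rightarrow> 'a"
    and mult :: "'a \<Rightarrow> 'a \<Rightarrow> 'a"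
    and br :: "'a list \<Rightarrow> 'a"
  assumes "n \<ge> 2"
    and "transposed_Poisson_nLie n smul mult br"
    and "simple_tp n smul mult br"
  shows "\<not> (\<exists>I. module.subspace smul I \<and> I \<noteq> {0} \<and> I \<noteq> UNIV \<and>
              (\<forall>u as. u \<in> I \<and> length as = n - 1 \<longrightarrow> br (u # as) \<in> I) \<and>
              (\<forall>a u as. u \<in> I \<and> length as = n - 1 \<longrightarrow> br (mult a u # as) \<in> I))"
proof
  interpret transposed_Poisson_nLie_algebra n smul mult br
    using assms(1,2) by unfold_locales simp_all
  assume "\<exists>I. module.subspace smul I \<and> I \<noteq> {0} \<and> I \<noteq> UNIV \<and>
              (\<forall>u as. u \<in> I \<and> length as = n - 1 \<longrightarrow> br (u # as) \<in> I) \<and>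
              (\<forall>a u as. u \<in> I \<and> length as = n - 1 \<longrightarrow> br (mult a u # as) \<in> I)"
  then obtain I where I: "quasi_ideal n smul mult br I" "I \<noteq> {0}" "I \<noteq> UNIV"
    by (auto simp: quasi_ideal_def)
  then have "I \<subseteq> {0}"
    using proper_quasi_ideal_subset_br_center br_center_eq_0_if_simple assms(3) by blast
  moreover have "0 \<in> I"
    using I(1) subspace_0 by (simp add: quasi_ideal_def)
  ultimately show False
    using I(2) by blast
qed

end
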